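(* Let $A\subset\mathcal{N}=\omega^\omega$, let $\mathcal{F}=\mathcal{F}_A$ be the family of all closed and discrete subsets of $A$, let $\{T_a : a\in A\}$ be an $(A,\mathcal{F})$-Reznichenko family of trees, $\mathcal{T}=\bigcup_{a\in A}T_a$, and let $R[\mathcal{F}]\subset 2^{\mathcal{T}}$ be the associated compact set. Then there exists no determining function (for $R[\mathcal{F}]\subset\mathbb{R}^{\mathcal{T}}$) $f:\mathcal{T}\to A$.
   Context: A tree is a partially ordered set $(T,\leq)$ in which for each $t$ the set $\{s: s<t\}$ is well ordered and which has a minimum, the root. An immediate successor of $t$ is a node $s>t$ with no $r$ satisfying $t<r<s$. The height is the least ordinal $\alpha$ such that no node has predecessor set of order type $\alpha$. A segment is a set $S\subset T$ of pairwise comparable elements such that $t\leq r\leq s$ with $t,s\in S$ implies $r\in S$; it is initial if it contains the root. For a set $A$ with $|A|\leq\mathfrak{c}$ and a hereditary family $\mathcal{F}$ of subsets of $A$, an $(A,\mathcal{F})$-Reznichenko family of trees is a family $\{T_a:a\in A\}$ of trees such that: (1) each $T_a$ has height $\omega$ and every node has $\mathfrak{c}$ many immediate successors; (2) $T_a\cap A=\{a\}$ and $a$ is the root of $T_a$; (3) for every $t\in\bigcup_a T_a$, $\{a\in A: t\in T_a\}\in\mathcal{F}$; (4) for $a\neq b$ and segments $S\subset T_a$, $S'\subset T_b$, $|S\cap S'|\leq 1$; (5) for every $B\in\mathcal{F}$ and every disjoint family $\{S_b:b\in B\}$ with $S_b$ a finite initial segment of $T_b$, there are $\mathfrak{c}$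 many $t$ that are simultaneously an immediate successor of $S_b$ in $T_b$ for all $b\in B$. $R[\mathcal{F}]\subset 2^{\mathcal{T}}$ is the family of all segments of all the trees $T_a$ (a compact set). For an index set $\Gamma$, a compact $K\subset\mathbb{R}^\Gamma$ and a separable metrizable $D$, $f:\Gamma\to D$ is a determining function if for all $x\in K$, compact $C\subset D$ and $\varepsilon>0$, the set $\{\gamma\in f^{-1}(C): |x_\gamma|>\varepsilon\}$ is finite. *)

theory Defs
  imports "HOL-Analysis.Analysis" "HOL-Library.Equipollence" "HOL-Library.FuncSet"
begin

definition tree_preds :: "'t set \<Rightarrow> ('t \<Rightarrow> 't \<Rightarrow> bool) \<Rightarrow> 't \<Rightarrow> 't set" where
  "tree_preds T le t = {s \<in> T. le s t \<and> s \<noteq> t}"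

definition is_tree :: "'t set \<Rightarrow> ('t \<Rightarrow> 't \<Rightarrow> bool) \<Rightarrow> bool" where
  "is_tree T le \<longleftrightarrow>
     (\<forall>x\<in>T. le x x) \<and>
     (\<forall>x\<in>T. \<forall>y\<in>T. le x y \<and> le y x \<longrightarrow> x = y) \<and>
     (\<forall>x\<in>T. \<forall>y\<in>T. \<forall>z\<in>T. le x y \<and> le y z \<longrightarrow> le x z) \<and>
     (\<forall>t\<in>T. (\<forall>x\<in>tree_preds T le t. \<forall>y\<in>tree_preds T le t. le x y \<or> le y x) \<and>
             (\<forall>X. X \<subseteq> tree_preds T le t \<and> X \<noteq> {} \<longrightarrow> (\<exists>m\<in>X. \<forall>x\<in>X. le m x))) \<and>
     (\<exists>r\<in>T. \<forall>t\<in>T. le r t)"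

definition tree_root :: "'t set \<Rightarrow> ('t \<Rightarrow> 't \<Rightarrow> bool) \<Rightarrow> 't" where
  "tree_root T le = (THE r. r \<in> T \<and> (\<forall>t\<in>T. le r t))"

text \<open>Height exactly omega: every predecessor set is finite (order type < omega),
  and every finite order type n is attained.\<close>
definition height_omega :: "'t set \<Rightarrow> ('t \<Rightarrow> 't \<Rightarrow> bool) \<Rightarrow> bool" where
  "height_omega T le \<longleftrightarrow>
     (\<forall>t\<in>T. finite (tree_preds T le t)) \<and> (\<forall>n::nat. \<exists>t\<in>T. card (tree_preds T le t) = n)"

definition immediate_succ :: "'t set \<Rightarrow> ('t \<Rightarrow> 't \<Rightarrow> bool) \<Rightarrow> 't \<Rightarrow> 't \<Rightarrow> bool" where
  "immediate_succ T le t s \<longleftrightarrow> t \<in> T \<and> s \<in> T \<and> le t s \<and> s \<noteq> t \<and>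
     \<not> (\<exists>r\<in>T. le t r \<and> r \<noteq> t \<and> le r s \<and> r \<noteq> s)"

definition is_segment :: "'t set \<Rightarrow> ('t \<Rightarrow> 't \<Rightarrow> bool) \<Rightarrow> 't set \<Rightarrow> bool" where
  "is_segment T le S \<longleftrightarrow> S \<subseteq> T \<and> (\<forall>x\<in>S. \<forall>y\<in>S. le x y \<or> le y x) \<and>
     (\<forall>t\<in>S. \<forall>s\<in>S. \<forall>r\<in>T. le t r \<and> le r s \<longrightarrow> r \<in> S)"

definition is_initial_segment :: "'t set \<Rightarrow> ('t \<Rightarrow> 't \<Rightarrow> bool) \<Rightarrow> 't set \<Rightarrow> bool" where
  "is_initial_segment T le S \<longleftrightarrow> is_segment T le S \<and> tree_root T le \<in> S"

text \<open>t is an immediate successor of the (finite, initial) segment S: S together with t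
  is again an initial segment with t on top, i.e. the strict predecessors of t are exactly S.\<close>
definition succ_of_segment :: "'t set \<Rightarrow> ('t \<Rightarrow> 't \<Rightarrow> bool) \<Rightarrow> 't set \<Rightarrow> 't \<Rightarrow> bool" where
  "succ_of_segment T le S t \<longleftrightarrow> t \<in> T \<and> tree_preds T le t = S"

definition closed_discrete_family :: "(nat \<Rightarrow> nat) set \<Rightarrow> (nat \<Rightarrow> nat) set set" where
  "closed_discrete_family A =
     {X. X \<subseteq> A \<and> closedin (top_of_set A) X \<and> (\<forall>x\<in>X. \<exists>U. open U \<and> U \<inter> X = {x})}"

text \<open>Reznichenko family of trees; nodes live in a type 't into which the index set
  (a subset of the Baire space) is embedded injectively by emb.\<close>
definition reznichenko_family ::
  "(nat \<Rightarrow> nat) set \<Rightarrow> (nat \<Rightarrow> nat) set set \<Rightarrow> ((nat \<Rightarrow> nat) \<Rightarrow> 't)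
     \<Rightarrow> ((nat \<Rightarrow> nat) \<Rightarrow> 't set) \<Rightarrow> ((nat \<Rightarrow> nat) \<Rightarrow> 't \<Rightarrow> 't \<Rightarrow> bool) \<Rightarrow> bool" where
  "reznichenko_family A F emb T le \<longleftrightarrow>
     (\<forall>a\<in>A. is_tree (T a) (le a) \<and> height_omega (T a) (le a) \<and>
        (\<forall>t\<in>T a. {s. immediate_succ (T a) (le a) t s} \<approx> (UNIV :: real set))) \<and>
     (\<forall>a\<in>A. T a \<inter> emb ` A = {emb a} \<and> tree_root (T a) (le a) = emb a) \<and>
     (\<forall>t\<in>(\<Union>a\<in>A. T a). {a\<in>A. t \<in> T a} \<in> F) \<and>
     (\<forall>a\<in>A. \<forall>b\<in>A. a \<noteq> b \<longrightarrow> (\<forall>S S'. is_segment (T a) (le a) S \<and> is_segment (T b) (le b) S'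
          \<longrightarrow> (\<forall>x\<in>S \<inter> S'. \<forall>y\<in>S \<inter> S'. x = y))) \<and>
     (\<forall>B\<in>F. \<forall>Sg. (\<forall>b\<in>B. finite (Sg b) \<and> is_initial_segment (T b) (le b) (Sg b)) \<and>
          (\<forall>b\<in>B. \<forall>b'\<in>B. b \<noteq> b' \<longrightarrow> Sg b \<inter> Sg b' = {}) \<longrightarrow>
          {t. \<forall>b\<in>B. succ_of_segment (T b) (le b) (Sg b) t} \<approx> (UNIV :: real set))"

text \<open>R[F]: all segments of all trees, viewed as points of {0,1}^T inside R^T.\<close>
definition R_family ::
  "(nat \<Rightarrow> nat) set \<Rightarrow> ((nat \<Rightarrow> nat) \<Rightarrow> 't set) \<Rightarrow> ((nat \<Rightarrow> nat) \<Rightarrow> 't \<Rightarrow> 't \<Rightarrow> bool)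
     \<Rightarrow> ('t \<Rightarrow> real) set" where
  "R_family A T le = {indicator S | S. \<exists>a\<in>A. is_segment (T a) (le a) S}"

definition determining_function ::
  "'i set \<Rightarrow> ('i \<Rightarrow> real) set \<Rightarrow> 'd::topological_space set \<Rightarrow> ('i \<Rightarrow> 'd) \<Rightarrow> bool" where
  "determining_function \<Gamma> K D f \<longleftrightarrow> f \<in> \<Gamma> \<rightarrow> D \<and>
     (\<forall>x\<in>K. \<forall>C. compact C \<and> C \<subseteq> D \<longrightarrow>
        (\<forall>\<epsilon>>0. finite {\<gamma>\<in>\<Gamma>. f \<gamma> \<in> C \<and> \<bar>x \<gamma>\<bar> > \<epsilon>}))"

end

theory Submission
  imports Defs
begin

text \<open>Suppose \<open>f\<close> were determining. For every \<open>y \<in> A\<close> there is a radius \<open>k\<close> such that a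
  finite initial segment of \<open>T y\<close> avoiding any prescribed countable set can be chosen to have
  only countably many immediate successors \<open>t\<close> with \<open>f t\<close> in the \<open>k\<close>-cylinder around \<open>y\<close>:
  otherwise one builds a branch of \<open>T y\<close> through nodes \<open>t\<^sub>n\<close> with \<open>f t\<^sub>n\<close> converging to \<open>y\<close>,
  and the indicator of that branch together with the compact set \<open>{y} \<union> {f t\<^sub>n}\<close> violates the
  determining property. The cylinders of these radii around the points of a suitable countable
  closed discrete \<open>B \<subseteq> A\<close> cover \<open>A\<close>. Choosing such segments \<open>S\<^sub>b\<close> (\<open>b \<in> B\<close>) pairwise disjoint,
  property (5) of the family gives continuum many common successors of all \<open>S\<^sub>b\<close>; but each of
  them lies in one of countably many countable sets.\<close>

definition baire_cylinder :: "(nat \<Rightarrow> nat) \<Rightarrow> nat \<Rightarrow> (nat \<Rightarrow> nat) set" where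
  "baire_cylinder y k = {z. \<forall>i<k. z i = y i}"

lemma baire_cylinder_self [simp]: "y \<in> baire_cylinder y k"
  by (simp add: baire_cylinder_def)

lemma open_baire_cylinder: "open (baire_cylinder y k)"
proof -
  have "baire_cylinder y k = (\<Inter>i<k. (\<lambda>z. z i) -` {y i})"
    by (auto simp: baire_cylinder_def)
  moreover have "open ((\<lambda>z::nat \<Rightarrow> nat. z i) -` {y i})" for i
    by (rule open_vimage) (auto simp: open_discrete)
  ultimately show ?thesis by auto
qed

lemma closed_singleton_fun: "closed {y :: 'a \<Rightarrow> 'b::t1_space}"
proof -
  have "- {y} = (\<Union>i. (\<lambda>z. z i) -` (- {y i}))"
    by (auto simp: fun_eq_iff)
  moreover have "open ((\<lambda>z::'a \<Rightarrow> 'b. z i) -` (- {y i}))" for i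
    by (rule open_vimage) auto
  ultimately have "open (- {y})"
    by (simp only:) (rule open_UN, blast)
  then show ?thesis
    by (simp add: closed_def)
qed

lemma compact_cylinder_sequence_limit:
  assumes "\<And>n. z n \<in> baire_cylinder y n"
  shows "compact (insert y (range z))"
proof -
  have "limitin (product_topology (\<lambda>i. euclidean) UNIV) z y sequentially"
    unfolding limitin_componentwise
  proof (intro conjI ballI)
    fix i :: nat
    have "eventually (\<lambda>n. z n i = y i) sequentially"
      unfolding eventually_sequentially using assms
      by (intro exI[of _ "Suc i"]) (auto simp: baire_cylinder_def)
    then show "limitin euclidean (\<lambda>n. z n i) (y i) sequentially"
      by (simp add: tendsto_eventually)
  qed auto
  then have "limitin euclidean z y sequentially"
    by (simp add: euclidean_product_topology)
  then have "compactin euclidean (insert y (range z))"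
    by (rule compactin_sequence_with_limit) auto
  then show ?thesis by simp
qed

lemma tree_le_refl:
  assumes "is_tree T le" "x \<in> T"
  shows "le x x"
  using assms(1) unfolding is_tree_def by (elim conjE) (use assms(2) in blast)

lemma tree_le_antisym:
  assumes "is_tree T le" "x \<in> T" "y \<in> T" "le x y" "le y x"
  shows "x = y"
  using assms(1) unfolding is_tree_def by (elim conjE) (use assms(2-) in blast)

lemma tree_le_trans:
  assumes "is_tree T le" "x \<in> T" "y \<in> T" "z \<in> T" "le x y" "le y z"
  shows "le x z"
  using assms(1) unfolding is_tree_def by (elim conjE) (use assms(2-) in blast)

lemma tree_preds_chain:
  assumes "is_tree T le" "t \<in> T" "x \<in> tree_preds T le t" "y \<in> tree_preds T le t"
  shows "le x y \<or> le y x"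
  using assms(1) unfolding is_tree_def by (elim conjE) (use assms(2-) in blast)

lemma tree_root_least:
  assumes "is_tree T le"
  shows "tree_root T le \<in> T" and "\<And>t. t \<in> T \<Longrightarrow> le (tree_root T le) t"
proof -
  obtain r where r: "r \<in> T" "\<forall>t\<in>T. le r t"
    using assms unfolding is_tree_def by (elim conjE) blast
  have "tree_root T le = r"
    unfolding tree_root_def
  proof (rule the_equality)
    fix r' assume "r' \<in> T \<and> (\<forall>t\<in>T. le r' t)"
    then show "r' = r"
      using r tree_le_antisym[OF assms, of r' r] by blast
  qed (use r in blast)
  then show "tree_root T le \<in> T" "\<And>t. t \<in> T \<Longrightarrow> le (tree_root T le) t"
    using r by auto
qed

lemma is_segment_insert_preds:
  assumes tree: "is_tree T le" and "t \<in> T"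
  shows "is_segment T le (insert t (tree_preds T le t))"
proof -
  have below: "le x t" if "x \<in> insert t (tree_preds T le t)" for x
    using that tree_le_refl[OF tree \<open>t \<in> T\<close>] by (auto simp: tree_preds_def)
  show ?thesis
    unfolding is_segment_def
  proof (intro conjI ballI impI)
    show "insert t (tree_preds T le t) \<subseteq> T"
      using \<open>t \<in> T\<close> by (auto simp: tree_preds_def)
  next
    fix x y assume "x \<in> insert t (tree_preds T le t)" "y \<in> insert t (tree_preds T le t)"
    then show "le x y \<or> le y x"
      using below tree_preds_chain[OF tree \<open>t \<in> T\<close>] by blast
  next
    fix x s r assume "x \<in> insert t (tree_preds T le t)" "s \<in> insert t (tree_preds T le t)"
      and "r \<in> T" and "le x r \<and> le r s"
    moreover have "s \<in> T"
      using \<open>s \<in> insert t (tree_preds T le t)\<close> \<open>t \<in> T\<close> by (auto simp: tree_preds_def)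
    ultimately have "le r t"
      using below tree_le_trans[OF tree \<open>r \<in> T\<close> \<open>s \<in> T\<close> \<open>t \<in> T\<close>] by blast
    then show "r \<in> insert t (tree_preds T le t)"
      using \<open>r \<in> T\<close> by (auto simp: tree_preds_def)
  qed
qed

lemma is_initial_segment_root:
  assumes "is_tree T le"
  shows "is_initial_segment T le {tree_root T le}"
proof -
  have "r = tree_root T le" if "r \<in> T" "le (tree_root T le) r" "le r (tree_root T le)" for r
    using that tree_root_least[OF assms] tree_le_antisym[OF assms] by blast
  then show ?thesis
    using tree_root_least[OF assms] unfolding is_initial_segment_def is_segment_def by auto
qed

lemma is_initial_segment_insert_succ:
  assumes tree: "is_tree T le" and "is_initial_segment T le S" "succ_of_segment T le S t"
  shows "is_initial_segment T le (insert t S)"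
proof -
  from \<open>succ_of_segment T le S t\<close> have t: "t \<in> T" and S: "S = tree_preds T le t"
    by (auto simp: succ_of_segment_def)
  have "is_segment T le (insert t S)"
    using is_segment_insert_preds[OF tree t] S by simp
  moreover have "tree_root T le \<in> insert t S"
    using \<open>is_initial_segment T le S\<close> by (simp add: is_initial_segment_def)
  ultimately show ?thesis by (simp add: is_initial_segment_def)
qed

lemma is_segment_UN_incseq:
  assumes "incseq S" and seg: "\<And>n. is_segment T le (S n)"
  shows "is_segment T le (\<Union>n. S n)"
proof -
  have common: "\<exists>n. x \<in> S n \<and> y \<in> S n" if "x \<in> S m" "y \<in> S m'" for x y m m'
    using that incseqD[OF \<open>incseq S\<close>, of m "max m m'"] incseqD[OF \<open>incseq S\<close>, of m' "max m m'"]
    by auto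
  show ?thesis
    unfolding is_segment_def
  proof (intro conjI ballI impI)
    show "(\<Union>n. S n) \<subseteq> T"
      using seg unfolding is_segment_def by blast
  next
    fix x y assume "x \<in> (\<Union>n. S n)" "y \<in> (\<Union>n. S n)"
    then obtain n where "x \<in> S n" "y \<in> S n"
      using common by blast
    then show "le x y \<or> le y x"
      using seg[of n] unfolding is_segment_def by blast
  next
    fix x y r assume "x \<in> (\<Union>n. S n)" "y \<in> (\<Union>n. S n)" and r: "r \<in> T" "le x r \<and> le r y"
    then obtain n where "x \<in> S n" "y \<in> S n"
      using common by blast
    then have "r \<in> S n"
      using seg[of n] r unfolding is_segment_def by blast
    then show "r \<in> (\<Union>n. S n)" by blast
  qed
qed

lemma reznichenko_family_tree:
  assumes "reznichenko_family A F emb T le" "a \<in> A"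
  shows "is_tree (T a) (le a)"
  using bspec[OF conjunct1[OF assms(1)[unfolded reznichenko_family_def]] assms(2)]
  by (rule conjunct1)

lemma reznichenko_family_root:
  assumes "reznichenko_family A F emb T le" "a \<in> A"
  shows "T a \<inter> emb ` A = {emb a}" and "tree_root (T a) (le a) = emb a"
  using bspec[OF conjunct1[OF conjunct2[OF assms(1)[unfolded reznichenko_family_def]]] assms(2)]
  by simp_all

lemma reznichenko_family_common_succs:
  assumes "reznichenko_family A F emb T le" "B \<in> F"
    and "\<And>b. b \<in> B \<Longrightarrow> finite (Sg b) \<and> is_initial_segment (T b) (le b) (Sg b)"
    and "\<And>b b'. b \<in> B \<Longrightarrow> b' \<in> B \<Longrightarrow> b \<noteq> b' \<Longrightarrow> Sg b \<inter> Sg b' = {}"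
  shows "{t. \<forall>b\<in>B. succ_of_segment (T b) (le b) (Sg b) t} \<approx> (UNIV :: real set)"
  using assms(3,4)
  by (intro conjunct2[OF conjunct2[OF conjunct2[OF conjunct2[OF
        assms(1)[unfolded reznichenko_family_def]]]], rule_format, OF assms(2)]) blast

lemma baire_cylinder_selector:
  fixes A :: "(nat \<Rightarrow> nat) set" and k :: "(nat \<Rightarrow> nat) \<Rightarrow> nat"
  obtains rep where "\<And>x. x \<in> A \<Longrightarrow> rep x \<in> A"
    and "\<And>x. x \<in> A \<Longrightarrow> x \<in> baire_cylinder (rep x) (k (rep x))"
    and "countable (rep ` A)"
    and "\<And>x z. x \<in> A \<Longrightarrow> z \<in> A \<Longrightarrow> z \<in> baire_cylinder (rep x) (k (rep x)) \<Longrightarrow> rep z = rep x"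
proof -
  text \<open>\<open>rep x\<close> is a canonical choice among the \<open>y\<close> whose \<open>k y\<close>-cylinder contains \<open>x\<close> and has the
    least possible radius; it depends only on the finite word that is the first \<open>kmin x\<close> values
    of \<open>x\<close>, which makes it countably valued and constant on its own cylinder.\<close>
  define kmin where "kmin x = (LEAST j. \<exists>y\<in>A. k y = j \<and> x \<in> baire_cylinder y j)" for x
  define g where "g w = (SOME y. y \<in> A \<and> k y = length w \<and> map y [0..<length w] = w)"
    for w :: "nat list"
  define rep where "rep x = g (map x [0..<kmin x])" for x
  have kmin_ex: "\<exists>y\<in>A. k y = kmin x \<and> x \<in> baire_cylinder y (kmin x)" if "x \<in> A" for x
  proof -
    have "\<exists>y\<in>A. k y = k x \<and> x \<in> baire_cylinder y (k x)"
      using that by auto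
    then show ?thesis
      unfolding kmin_def by (rule LeastI)
  qed
  have kmin_le: "kmin x \<le> k y" if "y \<in> A" "x \<in> baire_cylinder y (k y)" for x y
    unfolding kmin_def by (rule Least_le) (use that in blast)
  have rep: "rep x \<in> A \<and> k (rep x) = kmin x \<and> x \<in> baire_cylinder (rep x) (kmin x)"
    if "x \<in> A" for x
  proof -
    let ?w = "map x [0..<kmin x]"
    have "\<exists>y. y \<in> A \<and> k y = length ?w \<and> map y [0..<length ?w] = ?w"
      using kmin_ex[OF that] by (auto simp: baire_cylinder_def list_eq_iff_nth_eq)
    then have "g ?w \<in> A \<and> k (g ?w) = length ?w \<and> map (g ?w) [0..<length ?w] = ?w"
      unfolding g_def by (rule someI_ex)
    then show ?thesis
      by (simp add: rep_def baire_cylinder_def list_eq_iff_nth_eq)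
  qed
  have rep_const: "rep z = rep x"
    if x: "x \<in> A" and z: "z \<in> A" and zx: "z \<in> baire_cylinder (rep x) (k (rep x))" for x z
  proof -
    have agree: "\<forall>i<kmin x. z i = x i"
      using rep[OF x] zx by (auto simp: baire_cylinder_def)
    have "kmin z \<le> kmin x"
      using kmin_le[of "rep x" z] rep[OF x] zx by simp
    moreover obtain y where y: "y \<in> A" "k y = kmin z" "z \<in> baire_cylinder y (kmin z)"
      using kmin_ex[OF z] by blast
    ultimately have "x \<in> baire_cylinder y (k y)"
      using agree by (auto simp: baire_cylinder_def)
    then have "kmin x \<le> kmin z"
      using kmin_le[OF y(1)] y(2) by simp
    with \<open>kmin z \<le> kmin x\<close> have "map z [0..<kmin z] = map x [0..<kmin x]"
      using agree by (simp add: list_eq_iff_nth_eq)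
    then show ?thesis by (simp add: rep_def)
  qed
  have countable: "countable (rep ` A)"
    by (rule countable_subset[of _ "range g"]) (auto simp: rep_def)
  show thesis
  proof (rule that)
    show "rep x \<in> A" and "x \<in> baire_cylinder (rep x) (k (rep x))" if "x \<in> A" for x
      using rep[OF that] by simp_all
  qed fact+
qed

lemma closed_discrete_cylinder_cover:
  fixes A :: "(nat \<Rightarrow> nat) set" and k :: "(nat \<Rightarrow> nat) \<Rightarrow> nat"
  assumes "A \<noteq> {}"
  obtains B where "B \<in> closed_discrete_family A" "B \<noteq> {}" "countable B"
    and "\<And>x. x \<in> A \<Longrightarrow> \<exists>y\<in>B. x \<in> baire_cylinder y (k y)"
proof -
  obtain rep where rep_in: "\<And>x. x \<in> A \<Longrightarrow> rep x \<in> A"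
    and rep_cyl: "\<And>x. x \<in> A \<Longrightarrow> x \<in> baire_cylinder (rep x) (k (rep x))"
    and countable: "countable (rep ` A)"
    and rep_const: "\<And>x z. x \<in> A \<Longrightarrow> z \<in> A \<Longrightarrow> z \<in> baire_cylinder (rep x) (k (rep x)) \<Longrightarrow> rep z = rep x"
    by (rule baire_cylinder_selector[of A k]) blast+
  define B where "B = rep ` A"
  have "B \<subseteq> A"
    using rep_in by (auto simp: B_def)
  have unique: "b' = b" if b: "b \<in> B" "b' \<in> B" "b' \<in> baire_cylinder b (k b)" for b b'
  proof -
    obtain x x' where x: "x \<in> A" "b = rep x" and x': "x' \<in> A" "b' = rep x'"
      using b(1,2) by (auto simp: B_def)
    have "rep b' = b"
      using rep_const[OF x(1) rep_in[OF x'(1)]] x x' b(3) by simp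
    moreover have "rep b' = b'"
      using rep_const[OF x'(1) rep_in[OF x'(1)]] x' by simp
    ultimately show ?thesis by simp
  qed
  have discrete: "baire_cylinder b (k b) \<inter> B = {b}" if "b \<in> B" for b
    using unique[OF that] that baire_cylinder_self by blast
  define U where "U = (\<Union>b\<in>B. baire_cylinder b (k b) - {b})"
  have "open U"
    unfolding U_def by (intro open_UN ballI open_Diff open_baire_cylinder closed_singleton_fun)
  have "B = A \<inter> - U"
  proof
    show "B \<subseteq> A \<inter> - U"
      unfolding U_def using \<open>B \<subseteq> A\<close> unique by blast
    show "A \<inter> - U \<subseteq> B"
    proof
      fix x assume x: "x \<in> A \<inter> - U"
      then have "rep x \<in> B" and "x \<in> baire_cylinder (rep x) (k (rep x))"
        using rep_cyl by (simp_all add: B_def)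
      with x have "x = rep x"
        unfolding U_def by blast
      with \<open>rep x \<in> B\<close> show "x \<in> B" by simp
    qed
  qed
  with \<open>open U\<close> have "closedin (top_of_set A) B"
    unfolding closedin_closed by (intro exI[of _ "- U"]) (simp add: closed_def)
  moreover have "\<exists>V. open V \<and> V \<inter> B = {b}" if "b \<in> B" for b
    using discrete[OF that] open_baire_cylinder by blast
  ultimately have family: "B \<in> closed_discrete_family A"
    using \<open>B \<subseteq> A\<close> by (simp add: closed_discrete_family_def)
  have "B \<noteq> {}" "countable B"
    using assms countable by (simp_all add: B_def)
  moreover have "\<exists>y\<in>B. x \<in> baire_cylinder y (k y)" if "x \<in> A" for x
    using rep_cyl[OF that] that by (auto simp: B_def)
  ultimately show thesis
    by (rule that[OF family])
qed

definition cylinder_succs ::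
    "'t set \<Rightarrow> ('t \<Rightarrow> 't \<Rightarrow> bool) \<Rightarrow> ('t \<Rightarrow> nat \<Rightarrow> nat) \<Rightarrow> (nat \<Rightarrow> nat) \<Rightarrow> 't set \<Rightarrow> nat \<Rightarrow> 't set"
  where "cylinder_succs T le f y S k = {t. succ_of_segment T le S t \<and> f t \<in> baire_cylinder y k}"

definition sparse_radius ::
    "'t set \<Rightarrow> ('t \<Rightarrow> 't \<Rightarrow> bool) \<Rightarrow> ('t \<Rightarrow> nat \<Rightarrow> nat) \<Rightarrow> (nat \<Rightarrow> nat) \<Rightarrow> nat \<Rightarrow> bool"
  where "sparse_radius T le f y k \<longleftrightarrow>
    (\<forall>N. countable N \<and> tree_root T le \<notin> N \<longrightarrow>
      (\<exists>S. finite S \<and> is_initial_segment T le S \<and> S \<inter> N = {} \<and>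
           countable (cylinder_succs T le f y S k)))"

lemma branch_through_cylinders:
  assumes tree: "is_tree T le" and root: "tree_root T le \<notin> N"
    and extend: "\<And>S k. finite S \<Longrightarrow> is_initial_segment T le S \<Longrightarrow> S \<inter> N = {} \<Longrightarrow>
      \<exists>t. t \<in> cylinder_succs T le f y S k - N"
  obtains t :: "nat \<Rightarrow> 't" and Seg where "inj t" "is_segment T le Seg" "range t \<subseteq> Seg"
    and "\<And>n. f (t n) \<in> baire_cylinder y n"
proof -
  define pick where "pick S n = (SOME t. t \<in> cylinder_succs T le f y S n - N)" for S n
  define Ss where "Ss = rec_nat {tree_root T le} (\<lambda>n S. insert (pick S n) S)"
  define t where "t n = pick (Ss n) n" for n
  have Ss_Suc: "Ss (Suc n) = insert (t n) (Ss n)" for n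
    by (simp add: Ss_def t_def)
  have t_in: "t n \<in> cylinder_succs T le f y (Ss n) n - N"
    if "finite (Ss n)" "is_initial_segment T le (Ss n)" "Ss n \<inter> N = {}" for n
    unfolding t_def pick_def by (rule someI_ex) (rule extend[OF that])
  have Ss: "finite (Ss n) \<and> is_initial_segment T le (Ss n) \<and> Ss n \<inter> N = {}" for n
  proof (induction n)
    case 0
    show ?case
      using is_initial_segment_root[OF tree] root by (simp add: Ss_def)
  next
    case (Suc n)
    then have "succ_of_segment T le (Ss n) (t n)" "t n \<notin> N"
      using t_in[of n] by (simp_all add: cylinder_succs_def)
    then show ?case
      using Suc is_initial_segment_insert_succ[OF tree, of "Ss n" "t n"] by (simp add: Ss_Suc)
  qed
  have t_succ: "succ_of_segment T le (Ss n) (t n)" and t_cyl: "f (t n) \<in> baire_cylinder y n"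
    for n
    using Ss[of n] t_in[of n] by (simp_all add: cylinder_succs_def)
  have "incseq Ss"
    by (rule incseq_SucI) (auto simp: Ss_Suc)
  have "inj t"
  proof (rule linorder_injI)
    fix m n :: nat assume "m < n"
    then have "t m \<in> Ss n"
      using incseqD[OF \<open>incseq Ss\<close>, of "Suc m" n] by (auto simp: Ss_Suc)
    then show "t m \<noteq> t n"
      using t_succ[of n] by (auto simp: succ_of_segment_def tree_preds_def)
  qed
  moreover have "is_segment T le (Ss n)" for n
    using Ss[of n] by (simp add: is_initial_segment_def)
  then have "is_segment T le (\<Union>n. Ss n)"
    by (rule is_segment_UN_incseq[OF \<open>incseq Ss\<close>])
  moreover have "t n \<in> Ss (Suc n)" for n
    by (simp add: Ss_Suc)
  then have "range t \<subseteq> (\<Union>n. Ss n)"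
    by blast
  ultimately show thesis
    using t_cyl by (rule that)
qed

lemma determining_function_no_cylinder_branch:
  assumes det: "determining_function (\<Union>a\<in>A. T a) (R_family A T le) A f" and "y \<in> A"
    and "inj t" and seg: "is_segment (T y) (le y) Seg" and "range t \<subseteq> Seg"
    and cyl: "\<And>n. f (t n) \<in> baire_cylinder y n"
  shows False
proof -
  have f_into: "f \<in> (\<Union>a\<in>A. T a) \<rightarrow> A"
    using det unfolding determining_function_def by (rule conjunct1)
  have determining: "\<forall>x\<in>R_family A T le. \<forall>C. compact C \<and> C \<subseteq> A \<longrightarrow>
      (\<forall>\<epsilon>>0. finite {\<gamma> \<in> (\<Union>a\<in>A. T a). f \<gamma> \<in> C \<and> \<bar>x \<gamma>\<bar> > \<epsilon>})"
    using det unfolding determining_function_def by (rule conjunct2)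
  define C where "C = insert y (range (\<lambda>n. f (t n)))"
  have "compact C"
    unfolding C_def by (rule compact_cylinder_sequence_limit) (rule cyl)
  have "Seg \<subseteq> T y"
    using seg by (simp add: is_segment_def)
  then have t_tree: "t n \<in> (\<Union>a\<in>A. T a)" for n
    using \<open>range t \<subseteq> Seg\<close> \<open>y \<in> A\<close> by blast
  then have "C \<subseteq> A"
    using f_into \<open>y \<in> A\<close> unfolding C_def by blast
  moreover have "indicator Seg \<in> R_family A T le"
    unfolding R_family_def using seg \<open>y \<in> A\<close> by blast
  ultimately have "finite {\<gamma> \<in> (\<Union>a\<in>A. T a). f \<gamma> \<in> C \<and> \<bar>indicator Seg \<gamma> :: real\<bar> > 1/2}"
    using \<open>compact C\<close> by (intro determining[rule_format]) auto
  moreover have "range t \<subseteq> {\<gamma> \<in> (\<Union>a\<in>A. T a). f \<gamma> \<in> C \<and> \<bar>indicator Seg \<gamma> :: real\<bar> > 1/2}"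
    using t_tree \<open>range t \<subseteq> Seg\<close> by (auto simp: C_def)
  ultimately have "finite (range t)"
    by (rule finite_subset[rotated])
  with \<open>inj t\<close> show False
    using range_inj_infinite by blast
qed

lemma sparse_radius_exists:
  assumes det: "determining_function (\<Union>a\<in>A. T a) (R_family A T le) A f" and "y \<in> A"
    and tree: "is_tree (T y) (le y)"
  shows "\<exists>k. sparse_radius (T y) (le y) f y k"
proof (rule ccontr)
  assume no_radius: "\<nexists>k. sparse_radius (T y) (le y) f y k"
  have "\<exists>N. (countable N \<and> tree_root (T y) (le y) \<notin> N) \<and>
      \<not> (\<exists>S. finite S \<and> is_initial_segment (T y) (le y) S \<and> S \<inter> N = {} \<and>
        countable (cylinder_succs (T y) (le y) f y S k))" for k
    using no_radius unfolding sparse_radius_def not_all not_imp by simp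
  then have "\<forall>k. \<exists>N. (countable N \<and> tree_root (T y) (le y) \<notin> N) \<and>
      \<not> (\<exists>S. finite S \<and> is_initial_segment (T y) (le y) S \<and> S \<inter> N = {} \<and>
        countable (cylinder_succs (T y) (le y) f y S k))"
    by (intro allI)
  then obtain N where N: "\<And>k. countable (N k)" "\<And>k. tree_root (T y) (le y) \<notin> N k"
    and uncountable: "\<And>k S. finite S \<Longrightarrow> is_initial_segment (T y) (le y) S \<Longrightarrow> S \<inter> N k = {} \<Longrightarrow>
      uncountable (cylinder_succs (T y) (le y) f y S k)"
    by (metis choice)
  have extend: "\<exists>t. t \<in> cylinder_succs (T y) (le y) f y S k - (\<Union>k. N k)"
    if "finite S" "is_initial_segment (T y) (le y) S" "S \<inter> (\<Union>k. N k) = {}" for S k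
  proof -
    have "uncountable (cylinder_succs (T y) (le y) f y S k)"
      using uncountable[of S k] that by blast
    moreover have "countable (\<Union>k. N k)"
      using N(1) by blast
    ultimately have "\<not> cylinder_succs (T y) (le y) f y S k \<subseteq> (\<Union>k. N k)"
      using countable_subset by blast
    then show ?thesis
      by blast
  qed
  have root: "tree_root (T y) (le y) \<notin> (\<Union>k. N k)"
    using N(2) by blast
  obtain t Seg where "inj t" "is_segment (T y) (le y) Seg" "range t \<subseteq> Seg"
    "\<And>n. f (t n) \<in> baire_cylinder y n"
    using branch_through_cylinders[OF tree root extend] by blast
  then show False
    by (rule determining_function_no_cylinder_branch[OF det \<open>y \<in> A\<close>])
qed

lemma determining_function_sparse_radii:
  assumes det: "determining_function (\<Union>a\<in>A. T a) (R_family A T le) A f"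
    and trees: "\<And>y. y \<in> A \<Longrightarrow> is_tree (T y) (le y)"
  obtains k where "\<And>y. y \<in> A \<Longrightarrow> sparse_radius (T y) (le y) f y (k y)"
proof -
  have "\<forall>y\<in>A. \<exists>k. sparse_radius (T y) (le y) f y k"
  proof
    fix y assume "y \<in> A"
    with det show "\<exists>k. sparse_radius (T y) (le y) f y k"
      using trees[OF \<open>y \<in> A\<close>] by (rule sparse_radius_exists[where T = T and le = le])
  qed
  from bchoice[OF this] obtain k where "\<forall>y\<in>A. sparse_radius (T y) (le y) f y (k y)"
    by blast
  then show thesis
    using that by blast
qed

lemma countable_pairwise_disjoint_choice:
  fixes B :: "'b set" and P :: "'b \<Rightarrow> 'a set \<Rightarrow> bool" and r :: "'b \<Rightarrow> 'a"
  assumes "countable B"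
    and avoid: "\<And>b N. b \<in> B \<Longrightarrow> countable N \<Longrightarrow> r b \<notin> N \<Longrightarrow> \<exists>S. countable S \<and> P b S \<and> S \<inter> N = {}"
    and separate: "\<And>b b' S. b \<in> B \<Longrightarrow> b' \<in> B \<Longrightarrow> b \<noteq> b' \<Longrightarrow> P b S \<Longrightarrow> r b' \<notin> S"
  obtains Sg where "\<And>b. b \<in> B \<Longrightarrow> P b (Sg b)"
    and "\<And>b b'. b \<in> B \<Longrightarrow> b' \<in> B \<Longrightarrow> b \<noteq> b' \<Longrightarrow> Sg b \<inter> Sg b' = {}"
proof (cases "B = {}")
  case True
  then show thesis
    using that by blast
next
  case False
  text \<open>Enumerate \<open>B\<close> and let the \<open>n\<close>-th set avoid everything chosen before it, except the
    point \<open>r\<close>, which no other choice can contain anyway.\<close>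
  define bb where "bb = from_nat_into B"
  have bb: "bb n \<in> B" for n
    using False by (simp add: bb_def from_nat_into)
  define pick where "pick n U = (SOME S. countable S \<and> P (bb n) S \<and> S \<inter> (U - {r (bb n)}) = {})"
    for n U
  have pick: "countable (pick n U) \<and> P (bb n) (pick n U) \<and> pick n U \<inter> (U - {r (bb n)}) = {}"
    if "countable U" for n U
    unfolding pick_def by (rule someI_ex) (rule avoid[OF bb]; use that in simp)
  define U where "U = rec_nat {} (\<lambda>n V. V \<union> pick n V)"
  have U_Suc: "U (Suc n) = U n \<union> pick n (U n)" for n
    by (simp add: U_def)
  have countable_U: "countable (U n)" for n
  proof (induction n)
    case 0
    show ?case by (simp add: U_def)
  next
    case (Suc n)
    then show ?case
      using pick[OF Suc] by (simp add: U_Suc)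
  qed
  have "incseq U"
    by (rule incseq_SucI) (simp add: U_Suc)
  define idx where "idx = to_nat_on B"
  define Sg where "Sg b = pick (idx b) (U (idx b))" for b
  have bb_idx: "bb (idx b) = b" if "b \<in> B" for b
    using \<open>countable B\<close> that by (simp add: bb_def idx_def)
  have Sg: "P b (Sg b)" "Sg b \<inter> (U (idx b) - {r b}) = {}" "Sg b \<subseteq> U (Suc (idx b))"
    if "b \<in> B" for b
    using pick[OF countable_U, of "idx b" "idx b"] bb_idx[OF that] by (auto simp: Sg_def U_Suc)
  have disjoint_before: "Sg b \<inter> Sg b' = {}" if "b \<in> B" "b' \<in> B" "idx b < idx b'" for b b'
  proof -
    have "Sg b \<subseteq> U (idx b')"
      using Sg(3)[OF that(1)] incseqD[OF \<open>incseq U\<close>, of "Suc (idx b)" "idx b'"] that(3) by simp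
    moreover have "b \<noteq> b'"
      using that(3) by auto
    then have "r b' \<notin> Sg b"
      using separate[OF that(1,2)] Sg(1)[OF that(1)] by blast
    ultimately show ?thesis
      using Sg(2)[OF that(2)] by blast
  qed
  show thesis
  proof (rule that)
    show "P b (Sg b)" if "b \<in> B" for b
      using Sg(1)[OF that] .
    show "Sg b \<inter> Sg b' = {}" if "b \<in> B" "b' \<in> B" "b \<noteq> b'" for b b'
    proof -
      have "idx b \<noteq> idx b'"
        using inj_on_to_nat_on[OF \<open>countable B\<close>] that by (auto simp: idx_def inj_on_def)
      then show ?thesis
        using disjoint_before[OF that(1,2)] disjoint_before[OF that(2,1)] by (cases "idx b < idx b'") auto
    qed
  qed
qed

lemma reznichenko_sparse_segments:
  assumes rf: "reznichenko_family A F emb T le" and "inj emb" and "countable B" "B \<subseteq> A"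
    and sparse: "\<And>b. b \<in> B \<Longrightarrow> sparse_radius (T b) (le b) f b (k b)"
  obtains Sg where
    "\<And>b. b \<in> B \<Longrightarrow> finite (Sg b) \<and> is_initial_segment (T b) (le b) (Sg b) \<and>
      countable (cylinder_succs (T b) (le b) f b (Sg b) (k b))"
    and "\<And>b b'. b \<in> B \<Longrightarrow> b' \<in> B \<Longrightarrow> b \<noteq> b' \<Longrightarrow> Sg b \<inter> Sg b' = {}"
proof (rule countable_pairwise_disjoint_choice[where r = emb and
      P = "\<lambda>b S. finite S \<and> is_initial_segment (T b) (le b) S \<and>
        countable (cylinder_succs (T b) (le b) f b S (k b))"])
  show "countable B" by fact
next
  fix b N assume b: "b \<in> B" and N: "countable N" "emb b \<notin> N"
  have "tree_root (T b) (le b) = emb b"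
    using reznichenko_family_root(2)[OF rf] b \<open>B \<subseteq> A\<close> by blast
  with N have "countable N \<and> tree_root (T b) (le b) \<notin> N"
    by simp
  then obtain S where "finite S" "is_initial_segment (T b) (le b) S" "S \<inter> N = {}"
    "countable (cylinder_succs (T b) (le b) f b S (k b))"
    using sparse[OF b, unfolded sparse_radius_def, rule_format] by blast
  then show "\<exists>S. countable S \<and> (finite S \<and> is_initial_segment (T b) (le b) S \<and>
      countable (cylinder_succs (T b) (le b) f b S (k b))) \<and> S \<inter> N = {}"
    by (intro exI[of _ S]) (simp add: countable_finite)
next
  fix b b' S assume "b \<in> B" "b' \<in> B" "b \<noteq> b'"
    and "finite S \<and> is_initial_segment (T b) (le b) S \<and>
      countable (cylinder_succs (T b) (le b) f b S (k b))"
  then have "S \<subseteq> T b"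
    by (simp add: is_initial_segment_def is_segment_def)
  moreover have "T b \<inter> emb ` A = {emb b}" "emb b' \<in> emb ` A"
    using reznichenko_family_root(1)[OF rf] \<open>b \<in> B\<close> \<open>b' \<in> B\<close> \<open>B \<subseteq> A\<close> by auto
  ultimately show "emb b' \<notin> S"
    using injD[OF \<open>inj emb\<close>] \<open>b \<noteq> b'\<close> by blast
next
  fix Sg assume "\<And>b. b \<in> B \<Longrightarrow> finite (Sg b) \<and> is_initial_segment (T b) (le b) (Sg b) \<and>
      countable (cylinder_succs (T b) (le b) f b (Sg b) (k b))"
    and "\<And>b b'. b \<in> B \<Longrightarrow> b' \<in> B \<Longrightarrow> b \<noteq> b' \<Longrightarrow> Sg b \<inter> Sg b' = {}"
  then show thesis
    by (rule that)
qed

lemma common_succs_subset_cylinder_succs: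
  assumes "f \<in> (\<Union>a\<in>A. T a) \<rightarrow> A" "B \<subseteq> A" "B \<noteq> {}"
    and cover: "\<And>x. x \<in> A \<Longrightarrow> \<exists>y\<in>B. x \<in> baire_cylinder y (k y)"
  shows "{t. \<forall>b\<in>B. succ_of_segment (T b) (le b) (Sg b) t}
    \<subseteq> (\<Union>b\<in>B. cylinder_succs (T b) (le b) f b (Sg b) (k b))"
proof
  fix t assume t: "t \<in> {t. \<forall>b\<in>B. succ_of_segment (T b) (le b) (Sg b) t}"
  obtain b where "b \<in> B"
    using \<open>B \<noteq> {}\<close> by blast
  with t have "t \<in> T b"
    by (simp add: succ_of_segment_def)
  with assms(1,2) \<open>b \<in> B\<close> have "f t \<in> A"
    by blast
  then obtain y where "y \<in> B" "f t \<in> baire_cylinder y (k y)"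
    using cover by blast
  with t show "t \<in> (\<Union>b\<in>B. cylinder_succs (T b) (le b) f b (Sg b) (k b))"
    by (auto simp: cylinder_succs_def)
qed

theorem theorem4p2:
  fixes A :: "(nat \<Rightarrow> nat) set"
    and emb :: "(nat \<Rightarrow> nat) \<Rightarrow> 't"
    and T :: "(nat \<Rightarrow> nat) \<Rightarrow> 't set"
    and le :: "(nat \<Rightarrow> nat) \<Rightarrow> 't \<Rightarrow> 't \<Rightarrow> bool"
  assumes "A \<noteq> {}"
    and "inj emb"
    and "reznichenko_family A (closed_discrete_family A) emb T le"
  shows "\<not> (\<exists>f. determining_function (\<Union>a\<in>A. T a) (R_family A T le) A f)"
proof
  assume "\<exists>f. determining_function (\<Union>a\<in>A. T a) (R_family A T le) A f"
  then obtain f where det: "determining_function (\<Union>a\<in>A. T a) (R_family A T le) A f" ..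
  obtain k where k: "\<And>y. y \<in> A \<Longrightarrow> sparse_radius (T y) (le y) f y (k y)"
    using determining_function_sparse_radii[OF det reznichenko_family_tree[OF assms(3)]] by blast
  obtain B where B: "B \<in> closed_discrete_family A" "B \<noteq> {}" "countable B"
    and cover: "\<And>x. x \<in> A \<Longrightarrow> \<exists>y\<in>B. x \<in> baire_cylinder y (k y)"
    using closed_discrete_cylinder_cover[OF assms(1), of k] by blast
  then have "B \<subseteq> A"
    by (simp add: closed_discrete_family_def)
  obtain Sg where Sg: "\<And>b. b \<in> B \<Longrightarrow> finite (Sg b) \<and> is_initial_segment (T b) (le b) (Sg b) \<and>
      countable (cylinder_succs (T b) (le b) f b (Sg b) (k b))"
    and disjoint: "\<And>b b'. b \<in> B \<Longrightarrow> b' \<in> B \<Longrightarrow> b \<noteq> b' \<Longrightarrow> Sg b \<inter> Sg b' = {}"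
    using reznichenko_sparse_segments[OF assms(3,2) B(3) \<open>B \<subseteq> A\<close>, of f k] k \<open>B \<subseteq> A\<close> by blast
  let ?G = "{t. \<forall>b\<in>B. succ_of_segment (T b) (le b) (Sg b) t}"
  have "?G \<subseteq> (\<Union>b\<in>B. cylinder_succs (T b) (le b) f b (Sg b) (k b))"
    using det[unfolded determining_function_def, THEN conjunct1] \<open>B \<subseteq> A\<close> B(2) cover
    by (rule common_succs_subset_cylinder_succs)
  moreover have "countable (\<Union>b\<in>B. cylinder_succs (T b) (le b) f b (Sg b) (k b))"
    using Sg by (intro countable_UN[OF B(3)]) simp
  ultimately have "countable ?G"
    by (rule countable_subset)
  moreover have "?G \<approx> (UNIV :: real set)"
    by (rule reznichenko_family_common_succs[OF assms(3) B(1)]) (simp_all add: Sg disjoint)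
  ultimately have "countable (UNIV :: real set)"
    by (rule countable_eqpoll[OF _ eqpoll_sym])
  then show False
    using uncountable_UNIV_real by blast
qed

end
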